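(* Let $N,\mu,\beta,\sigma,\gamma,p>0$ and $0<\rho<1$ and consider the system $$S'=\mu N-\tfrac{\beta(1-\rho)}{N}SI-\tfrac{p}{N}S-\mu S,\qquad E'=\tfrac{\beta(1-\rho)}{N}SI-(\sigma+\mu)E,\qquad I'=\sigma E-(\gamma+\mu)I$$ on $\Omega=\{(S,E,I)\in\mathbb{R}_+^3: S+E+I\le N\}$. Let $\mathcal{R}_0=\dfrac{\mu N\sigma\beta(1-\rho)}{(\sigma+\mu)(\gamma+\mu)(p+\mu N)}$. If $\mathcal{R}_0>1$, then the disease-free equilibrium $\left(\frac{\mu N^2}{p+\mu N},0,0\right)$ is not an $\omega$-limit point of any orbit starting in the interior of $\Omega$.
   Context: $(S,E,I)$-subsystem of an SEIR model with vaccination rate $p$ and birth/death rate $\mu$. The $\omega$-limit set of a solution $x(\cdot)$ is $\{y:\exists t_n\to+\infty,\ x(t_n)\to y\}$. *)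

theory Defs
  imports "HOL-Analysis.Analysis"
begin

definition omega_limit :: "(real \<Rightarrow> 'a::topological_space) \<Rightarrow> 'a set" where
  "omega_limit x = {y. \<exists>t::nat \<Rightarrow> real. filterlim t at_top sequentially \<and> (\<lambda>n. x (t n)) \<longlonglongrightarrow> y}"

definition seir_field :: "real \<Rightarrow> real \<Rightarrow> real \<Rightarrow> real \<Rightarrow> real \<Rightarrow> real \<Rightarrow> real \<Rightarrow>
    real \<times> real \<times> real \<Rightarrow> real \<times> real \<times> real" where
  "seir_field N \<mu> \<beta> \<sigma> \<gamma> p \<rho> = (\<lambda>(S, E, I).
     (\<mu> * N - \<beta> * (1 - \<rho>) / N * S * I - p / N * S - \<mu> * S,
      \<beta> * (1 - \<rho>) / N * S * I - (\<sigma> + \<mu>) * E,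
      \<sigma> * E - (\<gamma> + \<mu>) * I))"

definition Omega :: "real \<Rightarrow> (real \<times> real \<times> real) set" where
  "Omega N = {(S, E, I). 0 \<le> S \<and> 0 \<le> E \<and> 0 \<le> I \<and> S + E + I \<le> N}"

definition R0 :: "real \<Rightarrow> real \<Rightarrow> real \<Rightarrow> real \<Rightarrow> real \<Rightarrow> real \<Rightarrow> real \<Rightarrow> real" where
  "R0 N \<mu> \<beta> \<sigma> \<gamma> p \<rho> =
     \<mu> * N * \<sigma> * \<beta> * (1 - \<rho>) / ((\<sigma> + \<mu>) * (\<gamma> + \<mu>) * (p + \<mu> * N))"

end

theory Submission
  imports Defs
begin

text \<open>
  Solutions starting in the interior of \<open>\<Omega>\<close> stay positive. With \<open>w = k1 / \<sigma>\<close>, the weighted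
  infected population \<open>U = E + w I\<close> satisfies \<open>U' = c I (S - S_crit)\<close>, and
  \<open>\<R>\<^sub>0 = S_dfe / S_crit\<close>, where \<open>S_dfe\<close> is the susceptible level of the disease-free equilibrium.
  So if \<open>\<R>\<^sub>0 > 1\<close>, \<open>U\<close> can only decrease where \<open>S < S_crit < S_dfe\<close>, while as long as \<open>U\<close> is
  small the susceptibles are driven up towards \<open>S_dfe\<close>. Weighting \<open>U\<close> by
  \<open>exp (-A (max 0 (b - S))\<^sup>2)\<close> turns this into a function \<open>\<Psi>\<close> that cannot decrease while \<open>U\<close> is
  small; hence \<open>U\<close> is bounded away from \<open>0\<close> along the orbit.
\<close>

lemma has_vector_derivative_fst:
  "(f has_vector_derivative f') F \<Longrightarrow> ((\<lambda>t. fst (f t)) has_vector_derivative fst f') F"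
  by (rule bounded_linear.has_vector_derivative[OF bounded_linear_fst])

lemma has_vector_derivative_snd:
  "(f has_vector_derivative f') F \<Longrightarrow> ((\<lambda>t. snd (f t)) has_vector_derivative snd f') F"
  by (rule bounded_linear.has_vector_derivative[OF bounded_linear_snd])

lemma DERIV_pos_part_square:
  "((\<lambda>z. (max 0 z)\<^sup>2) has_real_derivative 2 * max 0 y) (at y)"
proof -
  consider "0 < y" | "y < 0" | "y = 0" by linarith
  then show ?thesis
  proof cases
    case 1
    have "((\<lambda>z. z\<^sup>2) has_real_derivative 2 * max 0 y) (at y)"
      using 1 by (auto intro!: derivative_eq_intros)
    then show ?thesis
      by (rule has_field_derivative_transform_within_open[where S = "{0<..}"]) (use 1 in auto)
  next
    case 2
    have "((\<lambda>z. 0) has_real_derivative 2 * max 0 y) (at y)"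
      using 2 by simp
    then show ?thesis
      by (rule has_field_derivative_transform_within_open[where S = "{..<0}"]) (use 2 in auto)
  next
    case 3
    have "((\<lambda>z::real. (max 0 z)\<^sup>2 / z) \<longlongrightarrow> 0) (at 0)"
    proof (rule Lim_null_comparison[where g = abs])
      show "\<forall>\<^sub>F z in at 0. norm ((max 0 z)\<^sup>2 / z) \<le> \<bar>z\<bar>"
        by (rule always_eventually) (auto simp: power2_eq_square abs_mult divide_simps max_def)
      show "(abs \<longlongrightarrow> 0) (at (0::real))"
        using tendsto_rabs[OF tendsto_ident_at[of 0 UNIV]] by simp
    qed
    then show ?thesis using 3 by (simp add: DERIV_def)
  qed
qed

lemma first_nonpositive_time:
  fixes g :: "real \<Rightarrow> real"
  assumes "a \<le> b" "continuous_on {a..b} g" "0 < g a" "g b \<le> 0"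
  obtains t0 where "a < t0" "t0 \<le> b" "g t0 \<le> 0" "\<And>t. a \<le> t \<Longrightarrow> t < t0 \<Longrightarrow> 0 < g t"
proof -
  define Z where "Z = {a..b} \<inter> g -` {..0}"
  have "b \<in> Z" "a \<notin> Z" using assms by (auto simp: Z_def)
  moreover have "closed Z" unfolding Z_def
    by (rule continuous_closed_preimage[OF assms(2)]) auto
  moreover have "bdd_below Z" by (rule bdd_belowI[of _ a]) (auto simp: Z_def)
  ultimately have "Inf Z \<in> Z" using closed_contains_Inf by blast
  moreover have "0 < g t" if "a \<le> t" "t < Inf Z" for t
  proof (rule ccontr)
    assume "\<not> 0 < g t"
    then have "t \<in> Z" using that \<open>Inf Z \<in> Z\<close> by (auto simp: Z_def)
    then show False using cInf_lower[OF _ \<open>bdd_below Z\<close>] that by fastforce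
  qed
  ultimately show ?thesis
    using \<open>a \<notin> Z\<close> by (intro that[of "Inf Z"]) (auto simp: Z_def less_le)
qed

lemma DERIV_nonneg_below_level_imp_ge:
  fixes f :: "real \<Rightarrow> real"
  assumes "a \<le> b" "continuous_on {a..b} f" "L \<le> f a"
    and "\<And>t. a < t \<Longrightarrow> t < b \<Longrightarrow> f t < L \<Longrightarrow> \<exists>y. (f has_real_derivative y) (at t) \<and> 0 \<le> y"
  shows "L \<le> f b"
proof (rule ccontr)
  assume "\<not> L \<le> f b"
  define T where "T = {a..b} \<inter> f -` {L..}"
  have "a \<in> T" using assms by (simp add: T_def)
  moreover have "closed T" unfolding T_def
    by (rule continuous_closed_preimage[OF assms(2)]) auto
  moreover have "bdd_above T" by (rule bdd_aboveI[of _ b]) (auto simp: T_def)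
  ultimately have "Sup T \<in> T" using closed_contains_Sup by blast
  then have s: "a \<le> Sup T" "Sup T < b" "L \<le> f (Sup T)"
    using \<open>\<not> L \<le> f b\<close> by (auto simp: T_def less_le)
  have below: "f t < L" if "Sup T < t" "t \<le> b" for t
    using cSup_upper[OF _ \<open>bdd_above T\<close>, of t] that s by (force simp: T_def)
  have "f (Sup T) \<le> f b"
    by (rule DERIV_nonneg_imp_increasing_open)
      (use s below assms(4) in \<open>auto intro: continuous_on_subset[OF assms(2)]\<close>)
  then show False using s below[of b] by simp
qed

lemma DERIV_linear_decay_lower_bound:
  fixes f :: "real \<Rightarrow> real"
  assumes "a \<le> b" "continuous_on {a..b} f"
    and "\<And>t. a < t \<Longrightarrow> t < b \<Longrightarrow> \<exists>g\<ge>0. (f has_real_derivative g - k * f t) (at t)"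
  shows "f a * exp (k * a) \<le> f b * exp (k * b)"
proof (rule DERIV_nonneg_imp_increasing_open[OF assms(1)])
  fix t assume "a < t" "t < b"
  then obtain g where "0 \<le> g" and f': "(f has_real_derivative g - k * f t) (at t)"
    using assms(3) by blast
  have "((\<lambda>t. f t * exp (k * t)) has_real_derivative g * exp (k * t)) (at t)"
    by (rule derivative_eq_intros f' refl | simp add: algebra_simps)+
  then show "\<exists>y. ((\<lambda>t. f t * exp (k * t)) has_real_derivative y) (at t) \<and> 0 \<le> y"
    using \<open>0 \<le> g\<close> by auto
qed (intro continuous_intros assms(2))

lemma interior_Omega_pos:
  assumes "(s, e, i) \<in> interior (Omega N)"
  shows "0 < s" "0 < e" "0 < i"
proof -
  have "Omega N \<subseteq> {0..} \<times> {0..} \<times> {0..}" by (auto simp: Omega_def)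
  then have "interior (Omega N) \<subseteq> {0<..} \<times> {0<..} \<times> {0<..}"
    by (metis interior_mono interior_Times interior_real_atLeast)
  then show "0 < s" "0 < e" "0 < i" using assms by auto
qed

locale seir_solution =
  fixes N \<mu> \<beta> \<sigma> \<gamma> p \<rho> :: real
    and x :: "real \<Rightarrow> real \<times> real \<times> real"
  assumes N_pos: "0 < N" and mu_pos: "0 < \<mu>" and beta_pos: "0 < \<beta>" and sigma_pos: "0 < \<sigma>"
    and gamma_nonneg: "0 \<le> \<gamma>" and p_nonneg: "0 \<le> p" and rho_less_1: "\<rho> < 1"
    and solves: "\<And>t. 0 \<le> t \<Longrightarrow>
      (x has_vector_derivative seir_field N \<mu> \<beta> \<sigma> \<gamma> p \<rho> (x t)) (at t within {0..})"
    and initial_interior: "x 0 \<in> interior (Omega N)"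
begin

definition S :: "real \<Rightarrow> real" where "S t = fst (x t)"
definition E :: "real \<Rightarrow> real" where "E t = fst (snd (x t))"
definition I :: "real \<Rightarrow> real" where "I t = snd (snd (x t))"

definition c :: real where "c = \<beta> * (1 - \<rho>) / N"
definition k1 :: real where "k1 = \<sigma> + \<mu>"
definition k2 :: real where "k2 = \<gamma> + \<mu>"
definition m :: real where "m = p / N + \<mu>"

lemma c_pos: "0 < c" and k1_pos: "0 < k1" and k2_pos: "0 < k2" and m_pos: "0 < m"
  using N_pos mu_pos beta_pos sigma_pos gamma_nonneg p_nonneg rho_less_1
  by (auto simp: c_def k1_def k2_def m_def add_nonneg_pos)

lemma x_eq: "x t = (S t, E t, I t)"
  by (simp add: S_def E_def I_def)

lemma x_deriv:
  assumes "0 < t"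
  shows "(x has_vector_derivative
    (\<mu> * N - c * S t * I t - m * S t, c * S t * I t - k1 * E t, \<sigma> * E t - k2 * I t)) (at t)"
proof -
  have "at t within {0..} = at t"
    by (rule at_within_interior) (use assms in simp)
  then show ?thesis
    using solves[of t] assms
    by (simp add: seir_field_def x_eq c_def k1_def k2_def m_def algebra_simps)
qed

lemma S_deriv: "0 < t \<Longrightarrow> (S has_real_derivative \<mu> * N - c * S t * I t - m * S t) (at t)"
  and E_deriv: "0 < t \<Longrightarrow> (E has_real_derivative c * S t * I t - k1 * E t) (at t)"
  and I_deriv: "0 < t \<Longrightarrow> (I has_real_derivative \<sigma> * E t - k2 * I t) (at t)"
  using has_vector_derivative_fst[OF x_deriv] has_vector_derivative_snd[OF x_deriv]
    has_vector_derivative_fst[OF has_vector_derivative_snd[OF x_deriv]]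
    has_vector_derivative_snd[OF has_vector_derivative_snd[OF x_deriv]]
  by (simp_all add: has_real_derivative_iff_has_vector_derivative
      S_def[abs_def] E_def[abs_def] I_def[abs_def])

lemma continuous_on_x: "continuous_on {0..} x"
  using solves by (auto intro: has_vector_derivative_continuous simp: continuous_on_eq_continuous_within)

lemma continuous_on_S: "continuous_on {0..} S"
  and continuous_on_E: "continuous_on {0..} E"
  and continuous_on_I: "continuous_on {0..} I"
  unfolding S_def[abs_def] E_def[abs_def] I_def[abs_def]
  by (intro continuous_intros continuous_on_x)+

lemma SEI_pos:
  assumes "0 \<le> t"
  shows "0 < S t \<and> 0 < E t \<and> 0 < I t"
proof (rule ccontr)
  define g where "g \<tau> = min (S \<tau>) (min (E \<tau>) (I \<tau>))" for \<tau>
  have restrict: "continuous_on {0..T} f" if "continuous_on {0..} f" for f :: "real \<Rightarrow> real" and T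
    by (rule continuous_on_subset[OF that]) auto
  assume "\<not> (0 < S t \<and> 0 < E t \<and> 0 < I t)"
  then have "g t \<le> 0" by (auto simp: g_def)
  moreover have "0 < g 0"
    using interior_Omega_pos[of "S 0" "E 0" "I 0"] initial_interior by (simp add: g_def x_eq[symmetric])
  moreover have "continuous_on {0..} g"
    unfolding g_def[abs_def] by (intro continuous_intros continuous_on_S continuous_on_E continuous_on_I)
  ultimately obtain t0 where t0: "0 < t0" "g t0 \<le> 0"
    and before: "\<And>\<tau>. 0 \<le> \<tau> \<Longrightarrow> \<tau> < t0 \<Longrightarrow> 0 < S \<tau> \<and> 0 < E \<tau> \<and> 0 < I \<tau>"
    using first_nonpositive_time[OF assms restrict] by (metis g_def min_less_iff_conj)
  have "E 0 * exp (k1 * 0) \<le> E t0 * exp (k1 * t0)"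
  proof (rule DERIV_linear_decay_lower_bound)
    fix \<tau> assume "0 < \<tau>" "\<tau> < t0"
    then show "\<exists>g\<ge>0. (E has_real_derivative g - k1 * E \<tau>) (at \<tau>)"
      using E_deriv[of \<tau>] before[of \<tau>] c_pos by (intro exI[of _ "c * S \<tau> * I \<tau>"]) simp
  qed (use t0 restrict continuous_on_E in auto)
  then have "0 < E t0" using before[of 0] t0(1) by (smt (verit) exp_gt_zero zero_less_mult_iff)
  have "I 0 * exp (k2 * 0) \<le> I t0 * exp (k2 * t0)"
  proof (rule DERIV_linear_decay_lower_bound)
    fix \<tau> assume "0 < \<tau>" "\<tau> < t0"
    then show "\<exists>g\<ge>0. (I has_real_derivative g - k2 * I \<tau>) (at \<tau>)"
      using I_deriv[of \<tau>] before[of \<tau>] sigma_pos by (intro exI[of _ "\<sigma> * E \<tau>"]) simp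
  qed (use t0 restrict continuous_on_I in auto)
  then have "0 < I t0" using before[of 0] t0(1) by (smt (verit) exp_gt_zero zero_less_mult_iff)
  with \<open>0 < E t0\<close> t0(2) have "S t0 \<le> 0" by (auto simp: g_def)
  then have "\<mu> * N \<le> \<mu> * N - (c * I t0 + m) * S t0"
    using \<open>0 < I t0\<close> c_pos m_pos by (simp add: mult_nonneg_nonpos)
  then have "0 < \<mu> * N - c * S t0 * I t0 - m * S t0"
    using mult_pos_pos[OF mu_pos N_pos] by (simp add: algebra_simps)
  then obtain d where "0 < d" and decr: "\<And>h. 0 < h \<Longrightarrow> h < d \<Longrightarrow> S (t0 - h) < S t0"
    using DERIV_pos_inc_left[OF S_deriv[OF t0(1)]] by blast
  define h where "h = min (d / 2) (t0 / 2)"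
  have "0 < h" "h < d" "h < t0" using \<open>0 < d\<close> t0(1) by (auto simp: h_def)
  then show False using decr[of h] before[of "t0 - h"] \<open>S t0 \<le> 0\<close> by simp
qed

end

locale seir_endemic = seir_solution +
  assumes R0_gt_1: "1 < R0 N \<mu> \<beta> \<sigma> \<gamma> p \<rho>"
begin

definition w :: real where "w = k1 / \<sigma>"
definition S_dfe :: real where "S_dfe = \<mu> * N / m"
definition S_crit :: real where "S_crit = w * k2 / c"

lemma w_pos: "0 < w"
  using k1_pos sigma_pos by (simp add: w_def)

lemma S_crit_pos: "0 < S_crit"
  using w_pos k2_pos c_pos by (simp add: S_crit_def)

lemma R0_eq: "R0 N \<mu> \<beta> \<sigma> \<gamma> p \<rho> = S_dfe / S_crit"
proof -
  have "m * N = p + \<mu> * N" using N_pos by (simp add: m_def field_simps)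
  then have "R0 N \<mu> \<beta> \<sigma> \<gamma> p \<rho> = \<mu> * N * \<sigma> * (c * N) / (k1 * k2 * (m * N))"
    using N_pos by (simp add: R0_def c_def k1_def k2_def mult.commute mult.left_commute)
  also have "\<dots> = S_dfe / S_crit"
    using N_pos sigma_pos c_pos k1_pos k2_pos m_pos by (simp add: S_dfe_def S_crit_def w_def field_simps)
  finally show ?thesis .
qed

lemma S_crit_less_S_dfe: "S_crit < S_dfe"
  using R0_gt_1 S_crit_pos by (simp add: R0_eq less_divide_eq)

definition U :: "real \<Rightarrow> real" where "U t = E t + w * I t"

lemma U_deriv: "0 < t \<Longrightarrow> (U has_real_derivative c * I t * (S t - S_crit)) (at t)"
  unfolding U_def[abs_def]
  by (rule derivative_eq_intros E_deriv I_deriv refl | assumption)+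
    (use sigma_pos c_pos in \<open>simp add: w_def S_crit_def field_simps\<close>)

text \<open>
  Below \<open>S_crit\<close>, \<open>U\<close> decays at rate at most \<open>k2\<close>; but while \<open>U < \<epsilon>\<close> and \<open>S < b\<close>, \<open>S\<close> grows at
  rate at least \<open>\<eta>\<close>, and \<open>A\<close> is chosen with \<open>2 A (b - S_crit) \<eta> = k2\<close> so that the weight in
  \<open>\<Psi>\<close> compensates exactly.
\<close>

definition b :: real where "b = (S_crit + S_dfe) / 2"
definition \<eta> :: real where "\<eta> = m * (S_dfe - b) / 2"
definition A :: real where "A = k2 / (2 * (b - S_crit) * \<eta>)"
definition \<epsilon> :: real where "\<epsilon> = w * \<eta> / (c * b)"

lemma b_bounds: "S_crit < b" "b < S_dfe"
  using S_crit_less_S_dfe by (simp_all add: b_def)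

lemma \<eta>_pos: "0 < \<eta>"
  using m_pos b_bounds by (simp add: \<eta>_def)

lemma A_pos: "0 < A"
  using k2_pos b_bounds \<eta>_pos by (simp add: A_def)

lemma \<epsilon>_pos: "0 < \<epsilon>"
  using w_pos \<eta>_pos c_pos b_bounds S_crit_pos by (simp add: \<epsilon>_def)

lemma lyapunov_rate_nonneg:
  assumes "0 \<le> s" "0 \<le> e" "0 \<le> i" "e + w * i < \<epsilon>"
  shows "0 \<le> c * i * (s - S_crit) + (e + w * i) * (2 * A * max 0 (b - s)) * (\<mu> * N - c * s * i - m * s)"
proof -
  have b_pos: "0 < b" using S_crit_pos b_bounds by simp
  have "w * (c * b * i) < w * \<eta>"
  proof -
    have "c * b * (w * i) < c * b * \<epsilon>"
      using assms(2,4) c_pos b_pos by (intro mult_strict_left_mono) auto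
    also have "c * b * \<epsilon> = w * \<eta>" using c_pos b_pos by (simp add: \<epsilon>_def)
    finally show ?thesis by (simp add: algebra_simps)
  qed
  then have "c * b * i < \<eta>" using w_pos by simp
  have growth: "\<eta> \<le> \<mu> * N - c * s * i - m * s" if "s < b"
  proof -
    have "c * s * i \<le> c * b * i" using that assms(3) c_pos by (simp add: mult_right_mono)
    moreover have "m * s \<le> m * b" using that m_pos by simp
    moreover have "\<mu> * N - m * b = 2 * \<eta>" using m_pos by (simp add: \<eta>_def S_dfe_def algebra_simps)
    ultimately show ?thesis using \<open>c * b * i < \<eta>\<close> by linarith
  qed
  consider "b \<le> s" | "S_crit \<le> s" "s < b" | "s < S_crit" by linarith
  then show ?thesis
  proof cases
    case 1
    then show ?thesis using b_bounds assms(3) c_pos by simp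
  next
    case 2
    then show ?thesis
      using growth[OF \<open>s < b\<close>] \<eta>_pos A_pos assms(2,3) w_pos c_pos by simp
  next
    case 3
    have "- (k2 * (e + w * i)) \<le> - (c * S_crit * i)"
      using assms(2,3) c_pos k2_pos by (simp add: S_crit_def algebra_simps)
    also have "\<dots> \<le> c * i * (s - S_crit)"
      using assms(1,3) c_pos by (simp add: algebra_simps)
    finally have infection: "- (k2 * (e + w * i)) \<le> c * i * (s - S_crit)" .
    have "k2 = 2 * A * (b - S_crit) * \<eta>"
      using b_bounds \<eta>_pos by (simp add: A_def field_simps)
    also have "\<dots> \<le> 2 * A * max 0 (b - s) * (\<mu> * N - c * s * i - m * s)"
      using 3 b_bounds A_pos \<eta>_pos growth by (intro mult_mono) auto
    finally have "(e + w * i) * k2 \<le> (e + w * i) * (2 * A * max 0 (b - s) * (\<mu> * N - c * s * i - m * s))"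
      using assms(2,3) w_pos by (intro mult_left_mono) auto
    then show ?thesis using infection by (simp add: algebra_simps)
  qed
qed

definition \<Psi> :: "real \<Rightarrow> real" where "\<Psi> t = U t * exp (- A * (max 0 (b - S t))\<^sup>2)"

lemma \<Psi>_deriv_nonneg:
  assumes "0 < t" "U t < \<epsilon>"
  shows "\<exists>y. (\<Psi> has_real_derivative y) (at t) \<and> 0 \<le> y"
proof -
  define S' where "S' = \<mu> * N - c * S t * I t - m * S t"
  have "((\<lambda>t. b - S t) has_real_derivative - S') (at t)"
    using S_deriv[OF assms(1)] by (auto intro!: derivative_eq_intros simp: S'_def)
  from DERIV_chain2[OF DERIV_pos_part_square this]
  have q': "((\<lambda>t. (max 0 (b - S t))\<^sup>2) has_real_derivative 2 * max 0 (b - S t) * - S') (at t)"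
    by simp
  have "(\<Psi> has_real_derivative exp (- A * (max 0 (b - S t))\<^sup>2) *
      (c * I t * (S t - S_crit) + U t * (2 * A * max 0 (b - S t)) * S')) (at t)"
    unfolding \<Psi>_def[abs_def]
    by (rule derivative_eq_intros U_deriv[OF assms(1)] q' refl | simp add: algebra_simps)+
  moreover have "0 \<le> c * I t * (S t - S_crit) + U t * (2 * A * max 0 (b - S t)) * S'"
    unfolding U_def S'_def
    by (rule lyapunov_rate_nonneg) (use SEI_pos assms in \<open>auto simp: U_def less_imp_le\<close>)
  ultimately show ?thesis by auto
qed

lemma U_bounded_away_from_0: "\<exists>L>0. \<forall>t\<ge>0. L \<le> U t"
proof (intro exI conjI allI impI)
  define L where "L = min (\<epsilon> * exp (- A * b\<^sup>2)) (\<Psi> 0)"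
  have U_pos: "0 < U t" if "0 \<le> t" for t
    using SEI_pos[OF that] w_pos by (simp add: U_def add_pos_pos)
  have U_exp_le_\<Psi>: "U t * exp (- A * b\<^sup>2) \<le> \<Psi> t" if "0 \<le> t" for t
  proof -
    have "(max 0 (b - S t))\<^sup>2 \<le> b\<^sup>2"
      using SEI_pos[OF that] b_bounds S_crit_pos by (intro power_mono) auto
    then show ?thesis
      unfolding \<Psi>_def using U_pos[OF that] A_pos by (intro mult_left_mono) auto
  qed
  have \<Psi>_le_U: "\<Psi> t \<le> U t" if "0 \<le> t" for t
    unfolding \<Psi>_def using U_pos[OF that] A_pos by (intro mult_left_le) auto
  show "0 < L" unfolding L_def \<Psi>_def using \<epsilon>_pos U_pos[of 0] by simp
  fix t :: real assume "0 \<le> t"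
  have "L \<le> \<Psi> t"
  proof (rule DERIV_nonneg_below_level_imp_ge[OF \<open>0 \<le> t\<close>])
    show "continuous_on {0..t} \<Psi>"
      unfolding \<Psi>_def[abs_def] U_def[abs_def]
      by (intro continuous_intros continuous_on_subset[OF continuous_on_S]
          continuous_on_subset[OF continuous_on_E] continuous_on_subset[OF continuous_on_I]) auto
    show "L \<le> \<Psi> 0" by (simp add: L_def)
    fix \<tau> assume "0 < \<tau>" "\<tau> < t" "\<Psi> \<tau> < L"
    then have "U \<tau> * exp (- A * b\<^sup>2) < \<epsilon> * exp (- A * b\<^sup>2)"
      using U_exp_le_\<Psi>[of \<tau>] unfolding L_def by linarith
    then have "U \<tau> < \<epsilon>" by (rule mult_right_less_imp_less) simp
    then show "\<exists>y. (\<Psi> has_real_derivative y) (at \<tau>) \<and> 0 \<le> y"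
      using \<Psi>_deriv_nonneg[OF \<open>0 < \<tau>\<close>] by simp
  qed
  then show "L \<le> U t" using \<Psi>_le_U[OF \<open>0 \<le> t\<close>] by simp
qed

lemma infection_free_not_omega_limit: "(s, 0, 0) \<notin> omega_limit x"
proof
  assume "(s, 0, 0) \<in> omega_limit x"
  then obtain tn :: "nat \<Rightarrow> real" where tn: "filterlim tn at_top sequentially"
    and "(\<lambda>n. x (tn n)) \<longlonglongrightarrow> (s, 0, 0)"
    unfolding omega_limit_def by blast
  then have "(\<lambda>n. snd (x (tn n))) \<longlonglongrightarrow> (0, 0)"
    using tendsto_snd by fastforce
  then have "(\<lambda>n. fst (snd (x (tn n))) + w * snd (snd (x (tn n)))) \<longlonglongrightarrow> 0 + w * 0"
    using tendsto_fst tendsto_snd by (intro tendsto_intros) fastforce+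
  then have U_lim: "(\<lambda>n. U (tn n)) \<longlonglongrightarrow> 0" by (simp add: U_def E_def I_def)
  obtain L where "0 < L" and L: "\<And>t. 0 \<le> t \<Longrightarrow> L \<le> U t" using U_bounded_away_from_0 by blast
  have "\<forall>\<^sub>F n in sequentially. 0 \<le> tn n"
    using tn by (simp add: filterlim_at_top)
  then have "\<forall>\<^sub>F n in sequentially. L \<le> U (tn n)"
    by (rule eventually_mono) (rule L)
  then have "L \<le> 0" using tendsto_lowerbound[OF U_lim] by simp
  with \<open>0 < L\<close> show False by simp
qed

end

theorem mainTheorem9:
  fixes N \<mu> \<beta> \<sigma> \<gamma> p \<rho> :: real
    and x :: "real \<Rightarrow> real \<times> real \<times> real"
  assumes "N > 0" "\<mu> > 0" "\<beta> > 0" "\<sigma> > 0" "\<gamma> > 0" "p > 0"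
    and "0 < \<rho>" "\<rho> < 1"
    and "R0 N \<mu> \<beta> \<sigma> \<gamma> p \<rho> > 1"
    and "\<And>t. t \<ge> 0 \<Longrightarrow>
           (x has_vector_derivative seir_field N \<mu> \<beta> \<sigma> \<gamma> p \<rho> (x t)) (at t within {0..})"
    and "x 0 \<in> interior (Omega N)"
  shows "(\<mu> * N\<^sup>2 / (p + \<mu> * N), 0, 0) \<notin> omega_limit x"
proof -
  interpret seir_endemic N \<mu> \<beta> \<sigma> \<gamma> p \<rho> x
    by unfold_locales (use assms in auto)
  show ?thesis by (rule infection_free_not_omega_limit)
qed

end
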